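(* Work in a second-order (Bayes linear) belief framework in which $P(\cdot)$ denotes a (primitive) prevision/expectation specified for all quantities below, with variances and covariances $\mathrm{Var}$, $\mathrm{Cov}$ derived from it. For vectors of random quantities $X$ and $W$, define the adjusted expectation of $X$ by $W$ as $$P_W(X)=P(X)+\mathrm{Cov}(X,W)\,\mathrm{Var}(W)^{\dagger}\,\big(W-P(W)\big),$$ where $\dagger$ denotes the Moore–Penrose generalised inverse. Let $m\ge 1$ and $n_1,\dots,n_m\ge 1$, and let $\boldsymbol Z=\{Z_{ij}: i=1,\dots,m,\ j=1,\dots,n_i\}$ be random vectors (all of the same dimension as $X$) such that $Z_{ij}=\mu_i+\mathcal R_{ij}$, where $\mu_1,\dots,\mu_m$ are random vectors, each $\mathcal R_{ij}$ has $P(\mathcal R_{ij})=0$ and is uncorrelated with every $\mu_k$, the residuals $\mathcal R_{ij}$ and $\mathcal R_{kl}$ are uncorrelated for $(i,j)\ne(k,l)$, and $\mathrm{Var}(\mathcal R_{ij})$ does not depend on $j$. Write $\boldsymbol\mu=\mathrm{vec}(\mu_1,\dots,\mu_m)$. Suppose the quantity of interest $X$ satisfies $$X=\sum_{i=1}^m A_i\mu_i+\boldsymbol U=\boldsymbol{\mathcal A}\boldsymbol\mu+\boldsymbol U,$$ where $\boldsymbol{\mathcal A}=(A_1,\dots,A_m)$ is a known (constant) matrix and $\boldsymbol U$ is a random vector uncorrelated with all elements of all $\mu_i$ and all $\mathcal R_{ij}$. Then $$P_{\boldsymbol Z}(X)=P_{P_{\boldsymbol Z}(\boldsymbol\mu)}(X)=\boldsymbol{\mathcal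 A}\,P_{\boldsymbol Z}(\boldsymbol\mu)+P(\boldsymbol U).$$
   Context: $P_{\boldsymbol Z}(\boldsymbol\mu)$ denotes the adjusted expectation of $\boldsymbol\mu$ by the full collection $\boldsymbol Z$ (stacked into one vector), and $P_{P_{\boldsymbol Z}(\boldsymbol\mu)}(X)$ denotes the adjusted expectation of $X$ by the random vector $P_{\boldsymbol Z}(\boldsymbol\mu)$. The structure $Z_{ij}=\mu_i+\mathcal R_{ij}$ encodes second-order exchangeability of the members within each class $i$ (with class mean $\mu_i$), and implies $\mathrm{Cov}(Z_{ij},Z_{kl})=\mathrm{Cov}(\mu_i,\mu_k)$ for $i\neq k$ and $\mathrm{Cov}(Z_{ij},Z_{il})=\mathrm{Var}(\mu_i)$ for $j\ne l$. *)

theory Defs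
  imports Complex_Main
begin

text \<open>Random quantities are real functions on an abstract sample space 's.\<close>

definition prevision :: "(('s \<Rightarrow> real) \<Rightarrow> real) \<Rightarrow> bool" where
  "prevision P \<longleftrightarrow>
     (\<forall>a X Y. P (\<lambda>s. a * X s + Y s) = a * P X + P Y) \<and>
     P (\<lambda>_. 1) = 1 \<and>
     (\<forall>X. P (\<lambda>s. X s * X s) \<ge> 0)"

definition cov :: "(('s \<Rightarrow> real) \<Rightarrow> real) \<Rightarrow> ('s \<Rightarrow> real) \<Rightarrow> ('s \<Rightarrow> real) \<Rightarrow> real" where
  "cov P X Y = P (\<lambda>s. X s * Y s) - P X * P Y"

definition mat_mult :: "'j set \<Rightarrow> ('j \<Rightarrow> 'j \<Rightarrow> real) \<Rightarrow> ('j \<Rightarrow> 'j \<Rightarrow> real) \<Rightarrow> 'j \<Rightarrow> 'j \<Rightarrow> real" where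
  "mat_mult J A B = (\<lambda>i k. \<Sum>j\<in>J. A i j * B j k)"

text \<open>The four Penrose conditions (on J x J), with G vanishing outside J x J.\<close>

definition is_mp_inverse :: "'j set \<Rightarrow> ('j \<Rightarrow> 'j \<Rightarrow> real) \<Rightarrow> ('j \<Rightarrow> 'j \<Rightarrow> real) \<Rightarrow> bool" where
  "is_mp_inverse J M G \<longleftrightarrow>
     (\<forall>i\<in>J. \<forall>k\<in>J. mat_mult J (mat_mult J M G) M i k = M i k) \<and>
     (\<forall>i\<in>J. \<forall>k\<in>J. mat_mult J (mat_mult J G M) G i k = G i k) \<and>
     (\<forall>i\<in>J. \<forall>k\<in>J. mat_mult J M G i k = mat_mult J M G k i) \<and>
     (\<forall>i\<in>J. \<forall>k\<in>J. mat_mult J G M i k = mat_mult J G M k i) \<and>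
     (\<forall>i k. i \<notin> J \<or> k \<notin> J \<longrightarrow> G i k = 0)"

definition mp_inv :: "'j set \<Rightarrow> ('j \<Rightarrow> 'j \<Rightarrow> real) \<Rightarrow> 'j \<Rightarrow> 'j \<Rightarrow> real" where
  "mp_inv J M = (THE G. is_mp_inverse J M G)"

definition adj_exp ::
  "(('s \<Rightarrow> real) \<Rightarrow> real) \<Rightarrow> ('i \<Rightarrow> 's \<Rightarrow> real) \<Rightarrow> 'j set \<Rightarrow> ('j \<Rightarrow> 's \<Rightarrow> real)
     \<Rightarrow> 'i \<Rightarrow> 's \<Rightarrow> real" where
  "adj_exp P X J W =
     (let G = mp_inv J (\<lambda>j k. cov P (W j) (W k))
      in (\<lambda>i s. P (X i) + (\<Sum>j\<in>J. \<Sum>k\<in>J. cov P (X i) (W j) * G j k * (W k s - P (W k)))))"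

end

theory Submission
  imports Defs
begin

text \<open>Write \<open>P\<^sub>Z(Y) = P(Y) + L Y\<close>, where the adjustment \<open>L Y\<close> depends on Y only through
  \<open>Cov(Y, Z)\<close> and is linear in Y. As U is uncorrelated with Z, \<open>L X = \<A> L \<mu>\<close>, which gives
  \<open>P\<^sub>Z(X) = \<A> P\<^sub>Z(\<mu>) + P(U)\<close>. Since \<open>V G V = V\<close> for \<open>V = Var(Z)\<close> and its Moore--Penrose
  inverse G, the adjustment reproduces all covariances with Z; hence \<open>Cov(X, P\<^sub>Z(\<mu>)) = \<A> K\<close>
  with \<open>K = Var(L \<mu>)\<close>. Moreover \<open>L \<mu>\<close> lies in the range of K: a combination of the \<open>L \<mu>\<^sub>b\<close>
  uncorrelated with all of them has zero variance, so it is uncorrelated with Z, and being itself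
  an adjustment by Z it vanishes identically. Thus adjusting X by \<open>P\<^sub>Z(\<mu>)\<close> gives
  \<open>P(X) + \<A> K K\<^sup>\<dagger> L \<mu> = P(X) + \<A> L \<mu> = P\<^sub>Z(X)\<close>.\<close>

lemma prevision_linear:
  assumes "prevision P"
  shows "P (\<lambda>s. a * X s + Y s) = a * P X + P Y"
  using assms unfolding prevision_def by blast

lemma prevision_const:
  assumes "prevision P"
  shows "P (\<lambda>_. c) = c"
proof -
  have "P (\<lambda>_. 0) = 0"
    using prevision_linear[OF assms, of 1 "\<lambda>_. 0" "\<lambda>_. 0"] by simp
  then show ?thesis
    using prevision_linear[OF assms, of c "\<lambda>_. 1" "\<lambda>_. 0"] assms unfolding prevision_def by simp
qed

lemma prevision_scale:
  assumes "prevision P"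
  shows "P (\<lambda>s. a * X s) = a * P X"
  using prevision_linear[OF assms, of a X "\<lambda>_. 0"] prevision_const[OF assms] by simp

lemma prevision_add:
  assumes "prevision P"
  shows "P (\<lambda>s. X s + Y s) = P X + P Y"
  using prevision_linear[OF assms, of 1 X Y] by simp

lemma prevision_diff:
  assumes "prevision P"
  shows "P (\<lambda>s. X s - Y s) = P X - P Y"
  using prevision_linear[OF assms, of "-1" Y X] by simp

lemma prevision_sum:
  assumes "prevision P"
  shows "P (\<lambda>s. \<Sum>i\<in>I. f i s) = (\<Sum>i\<in>I. P (f i))"
proof (induction I rule: infinite_finite_induct)
  case (insert x F)
  then show ?case using prevision_add[OF assms, of "f x" "\<lambda>s. \<Sum>i\<in>F. f i s"] by simp
qed (simp_all add: prevision_const[OF assms])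

lemma cov_commute: "cov P X Y = cov P Y X"
  unfolding cov_def by (simp add: mult.commute)

lemma cov_linear_left:
  assumes "prevision P"
  shows "cov P (\<lambda>s. a * X s + Y s) Z = a * cov P X Z + cov P Y Z"
proof -
  have "P (\<lambda>s. (a * X s + Y s) * Z s) = P (\<lambda>s. a * (X s * Z s) + Y s * Z s)"
    by (simp add: algebra_simps)
  then show ?thesis
    unfolding cov_def prevision_linear[OF assms] by (simp add: algebra_simps)
qed

lemma cov_add_left:
  assumes "prevision P"
  shows "cov P (\<lambda>s. X s + Y s) Z = cov P X Z + cov P Y Z"
  using cov_linear_left[OF assms, of 1 X Y Z] by simp

lemma cov_const_left:
  assumes "prevision P"
  shows "cov P (\<lambda>_. c) Z = 0"
  unfolding cov_def using prevision_scale[OF assms, of c Z] prevision_const[OF assms] by simp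

lemma cov_diff_left:
  assumes "prevision P"
  shows "cov P (\<lambda>s. X s - Y s) Z = cov P X Z - cov P Y Z"
  using cov_linear_left[OF assms, of "-1" Y X Z] by simp

lemma cov_scale_left:
  assumes "prevision P"
  shows "cov P (\<lambda>s. a * X s) Z = a * cov P X Z"
  using cov_linear_left[OF assms, of a X "\<lambda>_. 0" Z] cov_const_left[OF assms] by simp

lemma cov_scale_right:
  assumes "prevision P"
  shows "cov P Z (\<lambda>s. a * X s) = a * cov P Z X"
  using cov_scale_left[OF assms] by (simp add: cov_commute[of P Z])

lemma cov_sum_left:
  assumes "prevision P"
  shows "cov P (\<lambda>s. \<Sum>i\<in>I. X i s) Z = (\<Sum>i\<in>I. cov P (X i) Z)"
proof (induction I rule: infinite_finite_induct)
  case (insert x F)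
  then show ?case
    using cov_add_left[OF assms, of "X x" "\<lambda>s. \<Sum>i\<in>F. X i s" Z] by simp
qed (simp_all add: cov_const_left[OF assms])

lemma cov_sum_right:
  assumes "prevision P"
  shows "cov P Z (\<lambda>s. \<Sum>i\<in>I. X i s) = (\<Sum>i\<in>I. cov P Z (X i))"
  using cov_sum_left[OF assms] by (simp add: cov_commute[of P Z])

lemma cov_add_const_right:
  assumes "prevision P"
  shows "cov P Z (\<lambda>s. c + X s) = cov P Z X"
  using cov_add_left[OF assms, of "\<lambda>_. c" X Z] cov_const_left[OF assms]
  by (simp add: cov_commute[of P Z])

lemma cov_add_right:
  assumes "prevision P"
  shows "cov P Z (\<lambda>s. X s + Y s) = cov P Z X + cov P Z Y"
  using cov_add_left[OF assms, of X Y Z] by (simp add: cov_commute[of P Z])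

lemma cov_add_consts:
  assumes "prevision P"
  shows "cov P (\<lambda>s. a + X s) (\<lambda>s. b + Y s) = cov P X Y"
  using cov_add_const_right[OF assms, of "\<lambda>s. a + X s" b Y] cov_add_const_right[OF assms, of Y a X]
  by (simp add: cov_commute[of P _ Y])

lemma cov_diff_const_right:
  assumes "prevision P"
  shows "cov P Z (\<lambda>s. X s - c) = cov P Z X"
  using cov_add_const_right[OF assms, of Z "- c" X] by simp

lemma cov_self_nonneg:
  assumes "prevision P"
  shows "cov P X X \<ge> 0"
proof -
  have "\<forall>X. 0 \<le> P (\<lambda>s. X s * X s)"
    using assms unfolding prevision_def by blast
  then have "0 \<le> P (\<lambda>s. (X s - P X) * (X s - P X))"
    by (rule allE[where x = "\<lambda>s. X s - P X"]) simp
  also have "(\<lambda>s. (X s - P X) * (X s - P X)) =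
      (\<lambda>s. 1 * (X s * X s) + ((- 2 * P X) * X s + P X * P X))"
    by (simp add: algebra_simps)
  finally show ?thesis
    unfolding cov_def prevision_linear[OF assms] prevision_const[OF assms] by simp
qed

lemma quadratic_nonneg_imp_linear_coeff_zero:
  fixes v c :: real
  assumes "\<And>t. 0 \<le> t * t * v + 2 * t * c"
  shows "c = 0"
proof -
  have "0 \<le> v" using assms[of 1] assms[of "-1"] by simp
  define t where "t = - c / (v + 1)"
  have vt: "(v + 1) * t = - c"
    unfolding t_def using \<open>0 \<le> v\<close> by simp
  have "(v + 1) * (v + 1) * (t * t * v + 2 * t * c) =
      ((v + 1) * t) * ((v + 1) * t) * v + 2 * ((v + 1) * t) * (v + 1) * c"
    by (simp add: algebra_simps)
  also have "\<dots> = - (c * c) * (v + 2)"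
    unfolding vt by (simp add: algebra_simps)
  finally have "(v + 1) * (v + 1) * (t * t * v + 2 * t * c) = - (c * c) * (v + 2)" .
  moreover have "0 \<le> (v + 1) * (v + 1) * (t * t * v + 2 * t * c)"
    using assms[of t] \<open>0 \<le> v\<close> by simp
  ultimately have "c * c * (v + 2) \<le> 0" by simp
  then show ?thesis using \<open>0 \<le> v\<close> by (auto simp: mult_le_0_iff)
qed

lemma cov_eq_0_if_var_eq_0:
  assumes "prevision P" and "cov P T T = 0"
  shows "cov P Y T = 0"
proof (rule quadratic_nonneg_imp_linear_coeff_zero)
  fix t
  let ?Q = "\<lambda>s. t * Y s + T s"
  have "cov P ?Q ?Q = t * cov P Y ?Q + cov P T ?Q"
    by (rule cov_linear_left[OF assms(1)])
  also have "\<dots> = t * (t * cov P Y Y + cov P T Y) + (t * cov P Y T + cov P T T)"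
    using cov_linear_left[OF assms(1)] by (simp add: cov_commute[of P _ ?Q])
  also have "\<dots> = t * t * cov P Y Y + 2 * t * cov P Y T"
    using assms(2) by (simp add: cov_commute[of P T Y] algebra_simps)
  finally have "cov P ?Q ?Q = t * t * cov P Y Y + 2 * t * cov P Y T" .
  then show "0 \<le> t * t * cov P Y Y + 2 * t * cov P Y T"
    using cov_self_nonneg[OF assms(1)] by metis
qed

text \<open>\<open>mat_mult J\<close> only sees entries in \<open>J \<times> J\<close>, so matrix identities are stated for
  restrictions.\<close>

definition mat_restrict :: "'j set \<Rightarrow> ('j \<Rightarrow> 'j \<Rightarrow> real) \<Rightarrow> 'j \<Rightarrow> 'j \<Rightarrow> real" where
  "mat_restrict J A = (\<lambda>i k. if i \<in> J \<and> k \<in> J then A i k else 0)"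

definition mat_transpose :: "('j \<Rightarrow> 'j \<Rightarrow> real) \<Rightarrow> 'j \<Rightarrow> 'j \<Rightarrow> real" where
  "mat_transpose A = (\<lambda>i k. A k i)"

lemma mat_restrict_eq_iff:
  "mat_restrict J A = mat_restrict J B \<longleftrightarrow> (\<forall>i\<in>J. \<forall>k\<in>J. A i k = B i k)"
  unfolding mat_restrict_def by (auto simp: fun_eq_iff)

lemma mat_restrict_eqD:
  "mat_restrict J A = mat_restrict J B \<Longrightarrow> i \<in> J \<Longrightarrow> k \<in> J \<Longrightarrow> A i k = B i k"
  unfolding mat_restrict_eq_iff by blast

lemma mat_mult_assoc: "mat_mult J (mat_mult J A B) C = mat_mult J A (mat_mult J B C)"
  unfolding mat_mult_def
  by (auto simp: fun_eq_iff sum_distrib_left sum_distrib_right mult.assoc intro: sum.swap)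

lemma mat_mult_restrict_cong_left:
  "mat_restrict J A = mat_restrict J A' \<Longrightarrow>
    mat_restrict J (mat_mult J A B) = mat_restrict J (mat_mult J A' B)"
  unfolding mat_restrict_eq_iff mat_mult_def by simp

lemma mat_mult_restrict_cong_right:
  "mat_restrict J B = mat_restrict J B' \<Longrightarrow>
    mat_restrict J (mat_mult J A B) = mat_restrict J (mat_mult J A B')"
  unfolding mat_restrict_eq_iff mat_mult_def by simp

lemma mat_transpose_mult:
  "mat_transpose (mat_mult J A B) = mat_mult J (mat_transpose B) (mat_transpose A)"
  unfolding mat_transpose_def mat_mult_def by (simp add: fun_eq_iff mult.commute)

lemma mat_transpose_transpose [simp]: "mat_transpose (mat_transpose A) = A"
  unfolding mat_transpose_def by simp

lemma mat_transpose_restrict_cong: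
  "mat_restrict J A = mat_restrict J B \<Longrightarrow>
    mat_restrict J (mat_transpose A) = mat_restrict J (mat_transpose B)"
  unfolding mat_restrict_eq_iff mat_transpose_def by simp

section \<open>The Moore--Penrose inverse of a symmetric matrix\<close>

lemma is_mp_inverse_iff:
  "is_mp_inverse J M G \<longleftrightarrow>
     mat_restrict J (mat_mult J (mat_mult J M G) M) = mat_restrict J M \<and>
     mat_restrict J (mat_mult J (mat_mult J G M) G) = mat_restrict J G \<and>
     mat_restrict J (mat_transpose (mat_mult J M G)) = mat_restrict J (mat_mult J M G) \<and>
     mat_restrict J (mat_transpose (mat_mult J G M)) = mat_restrict J (mat_mult J G M) \<and>
     mat_restrict J G = G"
  unfolding is_mp_inverse_def mat_restrict_eq_iff mat_transpose_def
  by (auto simp: mat_restrict_def fun_eq_iff)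

lemma mat_restrict_transpose: "mat_restrict J (mat_transpose A) = mat_transpose (mat_restrict J A)"
  unfolding mat_restrict_def mat_transpose_def by (auto simp: fun_eq_iff)

lemma is_mp_inverse_transpose:
  assumes M: "mat_transpose M = M" and G: "is_mp_inverse J M G"
  shows "is_mp_inverse J M (mat_transpose G)"
proof -
  note c = G[unfolded is_mp_inverse_iff]
  have "mat_restrict J (mat_transpose G) = mat_transpose G"
    using c by (simp add: mat_restrict_transpose)
  then show ?thesis
    unfolding is_mp_inverse_iff
    using c mat_transpose_restrict_cong[OF conjunct1[OF c]]
      mat_transpose_restrict_cong[OF conjunct1[OF conjunct2[OF c]]]
    by (simp add: mat_transpose_mult mat_mult_assoc M)
qed

lemma is_mp_inverse_absorb:
  assumes M: "mat_transpose M = M" and G1: "is_mp_inverse J M G1" and G2: "is_mp_inverse J M G2"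
  shows "mat_restrict J G1 = mat_restrict J (mat_mult J (mat_mult J G1 M) G2)"
proof -
  note a = G1[unfolded is_mp_inverse_iff] and b = G2[unfolded is_mp_inverse_iff]
  let ?m = "mat_mult J" and ?t = mat_transpose
  have "mat_restrict J G1 = mat_restrict J (?m G1 (?m M G1))"
    using a by (simp add: mat_mult_assoc)
  also have "\<dots> = mat_restrict J (?m G1 (?t (?m M G1)))"
    using a by (intro mat_mult_restrict_cong_right) simp
  also have "\<dots> = mat_restrict J (?m G1 (?m (?t G1) M))"
    by (simp add: mat_transpose_mult M)
  also have "\<dots> = mat_restrict J (?m G1 (?m (?t G1) (?t (?m (?m M G2) M))))"
  proof (rule mat_mult_restrict_cong_right, rule mat_mult_restrict_cong_right)
    show "mat_restrict J M = mat_restrict J (?t (?m (?m M G2) M))"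
      using mat_transpose_restrict_cong[OF conjunct1[OF b]] by (simp only: M)
  qed
  also have "\<dots> = mat_restrict J (?m G1 (?m (?t (?m M G1)) (?t (?m M G2))))"
    by (simp add: mat_transpose_mult mat_mult_assoc M)
  also have "\<dots> = mat_restrict J (?m G1 (?m (?m M G1) (?t (?m M G2))))"
    using a by (intro mat_mult_restrict_cong_right mat_mult_restrict_cong_left) simp
  also have "\<dots> = mat_restrict J (?m G1 (?m (?m M G1) (?m M G2)))"
    using b by (intro mat_mult_restrict_cong_right) simp
  also have "\<dots> = mat_restrict J (?m (?m (?m G1 M) G1) (?m M G2))"
    by (simp add: mat_mult_assoc)
  also have "\<dots> = mat_restrict J (?m G1 (?m M G2))"
    using a by (intro mat_mult_restrict_cong_left) simp
  finally show ?thesis by (simp add: mat_mult_assoc)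
qed

lemma is_mp_inverse_unique:
  assumes M: "mat_transpose M = M" and G1: "is_mp_inverse J M G1" and G2: "is_mp_inverse J M G2"
  shows "G1 = G2"
proof -
  have "mat_restrict J (mat_transpose G2) =
      mat_restrict J (mat_mult J (mat_mult J (mat_transpose G2) M) (mat_transpose G1))"
    using is_mp_inverse_absorb[OF M is_mp_inverse_transpose[OF M G2] is_mp_inverse_transpose[OF M G1]]
    .
  from mat_transpose_restrict_cong[OF this]
  have "mat_restrict J G2 = mat_restrict J (mat_mult J (mat_mult J G1 M) G2)"
    by (simp add: mat_transpose_mult mat_mult_assoc M)
  then have "mat_restrict J G1 = mat_restrict J G2"
    using is_mp_inverse_absorb[OF M G1 G2] by simp
  then show ?thesis
    using G1 G2 unfolding is_mp_inverse_iff by simp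
qed

lemma sum_mult_sum_commute:
  "(\<Sum>j\<in>J. (a j :: real) * (\<Sum>l\<in>L. b j l * c l)) = (\<Sum>l\<in>L. (\<Sum>j\<in>J. a j * b j l) * c l)"
  by (simp add: sum_distrib_left sum_distrib_right mult.assoc sum.swap[of _ J])

definition orth_projector :: "'j set \<Rightarrow> ('j \<Rightarrow> 'j \<Rightarrow> real) \<Rightarrow> bool" where
  "orth_projector J \<Pi> \<longleftrightarrow> mat_transpose \<Pi> = \<Pi> \<and> mat_restrict J (mat_mult J \<Pi> \<Pi>) = mat_restrict J \<Pi>"

lemma orth_projector_sym: "orth_projector J \<Pi> \<Longrightarrow> \<Pi> i k = \<Pi> k i"
  unfolding orth_projector_def mat_transpose_def by metis

lemma orth_projector_idem:
  "orth_projector J \<Pi> \<Longrightarrow> i \<in> J \<Longrightarrow> k \<in> J \<Longrightarrow> (\<Sum>j\<in>J. \<Pi> i j * \<Pi> j k) = \<Pi> i k"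
  unfolding orth_projector_def using mat_restrict_eqD[of J "mat_mult J \<Pi> \<Pi>" \<Pi>]
  by (simp add: mat_mult_def)

lemma orth_projector_residual:
  assumes \<Pi>: "orth_projector J \<Pi>" and w: "\<And>i. w i = v i - (\<Sum>j\<in>J. \<Pi> i j * v j)"
  shows orth_projector_residual_kernel: "i \<in> J \<Longrightarrow> (\<Sum>j\<in>J. \<Pi> i j * w j) = 0"
    and orth_projector_residual_orth: "(\<Sum>j\<in>J. w j * (\<Sum>l\<in>J. \<Pi> j l * x l)) = 0"
proof -
  show kernel: "(\<Sum>j\<in>J. \<Pi> i j * w j) = 0" if "i \<in> J" for i
  proof -
    have "(\<Sum>j\<in>J. \<Pi> i j * (\<Sum>l\<in>J. \<Pi> j l * v l)) = (\<Sum>l\<in>J. \<Pi> i l * v l)"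
      unfolding sum_mult_sum_commute using orth_projector_idem[OF \<Pi> that] by simp
    then show ?thesis
      unfolding w by (simp add: right_diff_distrib sum_subtractf)
  qed
  have "(\<Sum>j\<in>J. w j * \<Pi> j l) = (\<Sum>j\<in>J. \<Pi> l j * w j)" for l
    using orth_projector_sym[OF \<Pi>] by (simp add: mult.commute)
  then show "(\<Sum>j\<in>J. w j * (\<Sum>l\<in>J. \<Pi> j l * x l)) = 0"
    using kernel by (simp add: sum_mult_sum_commute)
qed

lemma orth_projector_rank_one_update:
  assumes \<Pi>: "orth_projector J \<Pi>" and w: "\<And>i. i \<in> J \<Longrightarrow> (\<Sum>j\<in>J. \<Pi> i j * w j) = 0"
    and c: "c = (\<Sum>j\<in>J. w j * w j)" "c \<noteq> 0"
    and range: "mat_restrict J \<Pi> = mat_restrict J (mat_mult J V A)"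
    and w_range: "\<And>i. i \<in> J \<Longrightarrow> (\<Sum>l\<in>J. V i l * e l) = w i"
  shows "orth_projector J (\<lambda>i k. \<Pi> i k + w i * w k / c)"
    and "mat_restrict J (\<lambda>i k. \<Pi> i k + w i * w k / c) =
      mat_restrict J (mat_mult J V (\<lambda>l k. A l k + e l * w k / c))"
proof -
  have "(\<Sum>j\<in>J. (\<Pi> i j + w i * w j / c) * (\<Pi> j k + w j * w k / c)) = \<Pi> i k + w i * w k / c"
    if "i \<in> J" "k \<in> J" for i k
  proof -
    have "(\<Sum>j\<in>J. (\<Pi> i j + w i * w j / c) * (\<Pi> j k + w j * w k / c)) =
        (\<Sum>j\<in>J. \<Pi> i j * \<Pi> j k) + w i / c * (\<Sum>j\<in>J. \<Pi> k j * w j)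
        + w k / c * (\<Sum>j\<in>J. \<Pi> i j * w j) + w i * w k / (c * c) * (\<Sum>j\<in>J. w j * w j)"
      using orth_projector_sym[OF \<Pi>]
      by (simp add: sum.distrib sum_distrib_left sum_divide_distrib algebra_simps)
    then show ?thesis
      using orth_projector_idem[OF \<Pi> that] w that c by simp
  qed
  then show "orth_projector J (\<lambda>i k. \<Pi> i k + w i * w k / c)"
    using \<Pi> unfolding orth_projector_def mat_restrict_eq_iff mat_mult_def
    by (auto simp: mat_transpose_def fun_eq_iff mult.commute)
  have "mat_mult J V (\<lambda>l k. A l k + e l * w k / c) i k =
      mat_mult J V A i k + (\<Sum>l\<in>J. V i l * e l) * w k / c" for i k
    unfolding mat_mult_def
    by (simp add: sum.distrib sum_distrib_left sum_divide_distrib algebra_simps)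
  then have "mat_mult J V (\<lambda>l k. A l k + e l * w k / c) i k = mat_mult J V A i k + w i * w k / c"
    if "i \<in> J" for i k
    using w_range[OF that] by simp
  then show "mat_restrict J (\<lambda>i k. \<Pi> i k + w i * w k / c) =
      mat_restrict J (mat_mult J V (\<lambda>l k. A l k + e l * w k / c))"
    using range unfolding mat_restrict_eq_iff by simp
qed

text \<open>Gram--Schmidt step: with \<open>w = v - \<Pi> v\<close>, the projector \<open>\<Pi> + w w\<^sup>T / |w|\<^sup>2\<close> also fixes v,
  and it stays of the form \<open>V A\<close> because \<open>w = V (e - A v)\<close> when \<open>v = V e\<close>.\<close>

lemma orth_projector_extend:
  assumes J: "finite J" and \<Pi>: "orth_projector J \<Pi>"
    and range: "mat_restrict J \<Pi> = mat_restrict J (mat_mult J V A)"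
    and v: "\<And>i. i \<in> J \<Longrightarrow> (\<Sum>l\<in>J. V i l * e l) = v i"
  shows "\<exists>\<Pi>' A'. orth_projector J \<Pi>' \<and> mat_restrict J \<Pi>' = mat_restrict J (mat_mult J V A') \<and>
    (\<forall>i\<in>J. (\<Sum>j\<in>J. \<Pi>' i j * v j) = v i) \<and>
    (\<forall>x. (\<forall>i\<in>J. (\<Sum>j\<in>J. \<Pi> i j * x j) = x i) \<longrightarrow> (\<forall>i\<in>J. (\<Sum>j\<in>J. \<Pi>' i j * x j) = x i))"
proof -
  define w where "w i = v i - (\<Sum>j\<in>J. \<Pi> i j * v j)" for i
  define c where "c = (\<Sum>j\<in>J. w j * w j)"
  note kernel = orth_projector_residual_kernel[OF \<Pi> w_def]
    and orth = orth_projector_residual_orth[OF \<Pi> w_def]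
  show ?thesis
  proof (cases "c = 0")
    case True
    then have "w i = 0" if "i \<in> J" for i
      using J that unfolding c_def by (simp add: sum_nonneg_eq_0_iff)
    then show ?thesis
      using \<Pi> range unfolding w_def by auto
  next
    case False
    let ?\<Pi>' = "\<lambda>i k. \<Pi> i k + w i * w k / c"
    have update: "(\<Sum>j\<in>J. ?\<Pi>' i j * x j) = (\<Sum>j\<in>J. \<Pi> i j * x j) + w i / c * (\<Sum>j\<in>J. w j * x j)"
      for i x by (simp add: sum.distrib sum_distrib_left algebra_simps)
    have "w j * v j = w j * w j + w j * (\<Sum>l\<in>J. \<Pi> j l * v l)" for j
      unfolding w_def by (simp add: algebra_simps)
    then have "(\<Sum>j\<in>J. w j * v j) = c"
      using orth[of v] unfolding c_def by (simp add: sum.distrib)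
    then have fix_v: "(\<Sum>j\<in>J. ?\<Pi>' i j * v j) = v i" for i
      unfolding update using False by (simp add: w_def)
    have fix_x: "\<forall>i\<in>J. (\<Sum>j\<in>J. ?\<Pi>' i j * x j) = x i"
      if "\<forall>i\<in>J. (\<Sum>j\<in>J. \<Pi> i j * x j) = x i" for x
      using orth[of x] that by (simp add: update)
    have "(\<Sum>l\<in>J. V i l * (e l - (\<Sum>j\<in>J. A l j * v j))) = w i" if "i \<in> J" for i
    proof -
      have "(\<Sum>l\<in>J. V i l * (\<Sum>j\<in>J. A l j * v j)) = (\<Sum>j\<in>J. \<Pi> i j * v j)"
        unfolding sum_mult_sum_commute using mat_restrict_eqD[OF range that]
        by (simp add: mat_mult_def)
      then show ?thesis
        using v[OF that] unfolding w_def by (simp add: right_diff_distrib sum_subtractf)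
    qed
    from orth_projector_rank_one_update[OF \<Pi> kernel c_def False range this]
    show ?thesis
      using fix_v fix_x by blast
  qed
qed

lemma orth_projector_onto_columns:
  assumes J: "finite J"
  obtains \<Pi> A where "orth_projector J \<Pi>"
    and "mat_restrict J (mat_mult J \<Pi> V) = mat_restrict J V"
    and "mat_restrict J \<Pi> = mat_restrict J (mat_mult J V A)"
proof -
  have "\<exists>\<Pi> A. orth_projector J \<Pi> \<and> (\<forall>i\<in>J. \<forall>k\<in>K. mat_mult J \<Pi> V i k = V i k) \<and>
      mat_restrict J \<Pi> = mat_restrict J (mat_mult J V A)" if "K \<subseteq> J" for K
    using finite_subset[OF that J] that
  proof (induction K rule: finite_subset_induct)
    case empty
    show ?case
      by (rule exI[of _ "\<lambda>_ _. 0"], rule exI[of _ "\<lambda>_ _. 0"])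
        (simp add: orth_projector_def mat_transpose_def mat_mult_def)
  next
    case (insert a K)
    then obtain \<Pi> A where \<Pi>: "orth_projector J \<Pi>"
      and fix_K: "\<forall>i\<in>J. \<forall>k\<in>K. mat_mult J \<Pi> V i k = V i k"
      and range: "mat_restrict J \<Pi> = mat_restrict J (mat_mult J V A)"
      by blast
    have column: "(\<Sum>l\<in>J. V i l * (if l = a then 1 else 0)) = V i a" for i
      using J \<open>a \<in> J\<close> by (simp add: if_distrib[of "(*) _"] cong: if_cong)
    obtain \<Pi>' A' where \<Pi>': "orth_projector J \<Pi>'"
      and range': "mat_restrict J \<Pi>' = mat_restrict J (mat_mult J V A')"
      and fix_a: "\<forall>i\<in>J. (\<Sum>j\<in>J. \<Pi>' i j * V j a) = V i a"
      and keep: "\<forall>x. (\<forall>i\<in>J. (\<Sum>j\<in>J. \<Pi> i j * x j) = x i) \<longrightarrow> (\<forall>i\<in>J. (\<Sum>j\<in>J. \<Pi>' i j * x j) = x i)"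
      using orth_projector_extend[OF J \<Pi> range column] by blast
    have "mat_mult J \<Pi>' V i k = V i k" if "i \<in> J" "k \<in> insert a K" for i k
    proof (cases "k = a")
      case True
      then show ?thesis
        using fix_a \<open>i \<in> J\<close> by (simp add: mat_mult_def)
    next
      case False
      then have "k \<in> K"
        using that by simp
      then show ?thesis
        using keep[rule_format, of "\<lambda>j. V j k" i] fix_K \<open>i \<in> J\<close> by (simp add: mat_mult_def)
    qed
    then show ?case
      using \<Pi>' range' by blast
  qed
  from this[OF order_refl] obtain \<Pi> A where \<Pi>: "orth_projector J \<Pi>"
    and fix_J: "\<forall>i\<in>J. \<forall>k\<in>J. mat_mult J \<Pi> V i k = V i k"
    and range: "mat_restrict J \<Pi> = mat_restrict J (mat_mult J V A)"
    by blast
  from fix_J have "mat_restrict J (mat_mult J \<Pi> V) = mat_restrict J V"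
    unfolding mat_restrict_eq_iff .
  then show ?thesis
    by (rule that[OF \<Pi> _ range])
qed

lemma mat_restrict_idem [simp]: "mat_restrict J (mat_restrict J A) = mat_restrict J A"
  unfolding mat_restrict_def by (auto simp: fun_eq_iff)

text \<open>\<open>A\<^sup>T V A\<close> is the Moore--Penrose inverse of V when \<open>V A\<close> is the orthogonal projector onto
  the column space of V.\<close>

lemma range_projector_mp_products:
  assumes V: "mat_transpose V = V" and \<Pi>: "orth_projector J \<Pi>"
    and \<Pi>V: "mat_restrict J (mat_mult J \<Pi> V) = mat_restrict J V"
    and range: "mat_restrict J \<Pi> = mat_restrict J (mat_mult J V A)"
  defines "X \<equiv> mat_mult J (mat_transpose A) (mat_mult J V A)"
  shows "mat_restrict J (mat_mult J V X) = mat_restrict J \<Pi>"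
    and "mat_restrict J (mat_mult J X V) = mat_restrict J \<Pi>"
    and "mat_restrict J (mat_mult J X \<Pi>) = mat_restrict J X"
proof -
  let ?m = "mat_mult J" and ?t = mat_transpose and ?r = "mat_restrict J"
  have \<Pi>_sym: "?t \<Pi> = \<Pi>" and \<Pi>_idem: "?r (?m \<Pi> \<Pi>) = ?r \<Pi>"
    using \<Pi> unfolding orth_projector_def by simp_all
  have At_V: "?r (?m (?t A) V) = ?r \<Pi>"
    using mat_transpose_restrict_cong[OF range] by (simp add: \<Pi>_sym mat_transpose_mult V)
  have V_\<Pi>: "?r (?m V \<Pi>) = ?r V"
    using mat_transpose_restrict_cong[OF \<Pi>V] by (simp add: \<Pi>_sym mat_transpose_mult V)
  have "?r (?m V X) = ?r (?m V (?m (?m (?t A) V) A))"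
    unfolding X_def by (simp add: mat_mult_assoc)
  also have "\<dots> = ?r (?m V (?m \<Pi> A))"
    by (rule mat_mult_restrict_cong_right, rule mat_mult_restrict_cong_left, rule At_V)
  also have "\<dots> = ?r (?m (?m V \<Pi>) A)"
    by (simp add: mat_mult_assoc)
  also have "\<dots> = ?r \<Pi>"
    using mat_mult_restrict_cong_left[OF V_\<Pi>, of A] range by simp
  finally show "?r (?m V X) = ?r \<Pi>" .
  have "?r (?m X V) = ?r (?m (?t A) (?m (?m V A) V))"
    unfolding X_def by (simp add: mat_mult_assoc)
  also have "\<dots> = ?r (?m (?t A) (?m \<Pi> V))"
    by (rule mat_mult_restrict_cong_right, rule mat_mult_restrict_cong_left, rule range[symmetric])
  also have "\<dots> = ?r (?m (?t A) V)"
    by (rule mat_mult_restrict_cong_right, rule \<Pi>V)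
  finally show "?r (?m X V) = ?r \<Pi>"
    using At_V by simp
  have "?r (?m X \<Pi>) = ?r (?m (?t A) (?m (?m V A) \<Pi>))"
    unfolding X_def by (simp add: mat_mult_assoc)
  also have "\<dots> = ?r (?m (?t A) (?m \<Pi> \<Pi>))"
    by (rule mat_mult_restrict_cong_right, rule mat_mult_restrict_cong_left, rule range[symmetric])
  also have "\<dots> = ?r X"
    unfolding X_def using \<Pi>_idem range by (intro mat_mult_restrict_cong_right) simp
  finally show "?r (?m X \<Pi>) = ?r X" .
qed

lemma mp_inverse_exists:
  assumes J: "finite J" and V: "mat_transpose V = V"
  shows "\<exists>G. is_mp_inverse J V G"
proof -
  let ?m = "mat_mult J" and ?r = "mat_restrict J"
  obtain \<Pi> A where \<Pi>: "orth_projector J \<Pi>"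
    and \<Pi>V: "?r (?m \<Pi> V) = ?r V" and range: "?r \<Pi> = ?r (?m V A)"
    using orth_projector_onto_columns[OF J] .
  define X where "X = ?m (mat_transpose A) (?m V A)"
  note products = range_projector_mp_products[OF V \<Pi> \<Pi>V range, folded X_def]
  have G: "?r (?r X) = ?r X"
    by simp
  have VG: "?r (?m V (?r X)) = ?r \<Pi>"
    using mat_mult_restrict_cong_right[OF G] products(1) by simp
  have GV: "?r (?m (?r X) V) = ?r \<Pi>"
    using mat_mult_restrict_cong_left[OF G] products(2) by simp
  have "?r (?m (?m (?r X) V) (?r X)) = ?r (?m (?r X) \<Pi>)"
    unfolding mat_mult_assoc by (rule mat_mult_restrict_cong_right, rule VG)
  also have "\<dots> = ?r X"
    using mat_mult_restrict_cong_left[OF G] products(3) by simp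
  finally have "is_mp_inverse J V (?r X)"
    unfolding is_mp_inverse_iff
    using mat_mult_restrict_cong_left[OF VG, of V] mat_transpose_restrict_cong[OF VG]
      mat_transpose_restrict_cong[OF GV] \<Pi>V VG GV \<Pi>
    by (simp add: orth_projector_def)
  then show ?thesis
    by blast
qed

lemma mp_inv_is_mp_inverse:
  assumes "finite J" and "mat_transpose V = V"
  shows "is_mp_inverse J V (mp_inv J V)"
proof -
  obtain G where G: "is_mp_inverse J V G"
    using mp_inverse_exists[OF assms] ..
  show ?thesis
    unfolding mp_inv_def
    by (rule theI[of "is_mp_inverse J V", OF G]) (rule is_mp_inverse_unique[OF assms(2) _ G])
qed

section \<open>Adjustment by a finite data vector\<close>

abbreviation cov_matrix :: "(('s \<Rightarrow> real) \<Rightarrow> real) \<Rightarrow> ('j \<Rightarrow> 's \<Rightarrow> real) \<Rightarrow> 'j \<Rightarrow> 'j \<Rightarrow> real" where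
  "cov_matrix P W \<equiv> \<lambda>j k. cov P (W j) (W k)"

lemma mp_inv_cov_matrix:
  assumes "finite J" and "i \<in> J" and "k \<in> J"
  shows "mat_mult J (mat_mult J (cov_matrix P W) (mp_inv J (cov_matrix P W))) (cov_matrix P W) i k =
    cov P (W i) (W k)"
proof -
  have "mat_transpose (cov_matrix P W) = cov_matrix P W"
    unfolding mat_transpose_def by (simp add: cov_commute)
  then show ?thesis
    using mp_inv_is_mp_inverse[OF assms(1)] assms(2,3) unfolding is_mp_inverse_def by blast
qed

definition adjustment ::
  "(('s \<Rightarrow> real) \<Rightarrow> real) \<Rightarrow> 'j set \<Rightarrow> ('j \<Rightarrow> 's \<Rightarrow> real) \<Rightarrow> ('s \<Rightarrow> real) \<Rightarrow> 's \<Rightarrow> real" where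
  "adjustment P J W Y =
     (\<lambda>s. \<Sum>j\<in>J. \<Sum>k\<in>J. cov P Y (W j) * mp_inv J (cov_matrix P W) j k * (W k s - P (W k)))"

lemma adj_exp_eq_adjustment: "adj_exp P X J W i = (\<lambda>s. P (X i) + adjustment P J W (X i) s)"
  unfolding adj_exp_def adjustment_def Let_def by simp

lemma prevision_adjustment:
  assumes "prevision P"
  shows "P (adjustment P J W Y) = 0"
  unfolding adjustment_def
  by (simp add: prevision_sum[OF assms] prevision_scale[OF assms] prevision_diff[OF assms]
      prevision_const[OF assms])

lemma cov_adjustment_right:
  assumes "prevision P"
  shows "cov P Z (adjustment P J W Y) =
    (\<Sum>j\<in>J. \<Sum>k\<in>J. cov P Y (W j) * mp_inv J (cov_matrix P W) j k * cov P Z (W k))"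
  unfolding adjustment_def
  by (simp add: cov_sum_right[OF assms] cov_scale_right[OF assms] cov_diff_const_right[OF assms])

lemma adjustment_cong:
  "(\<And>j. j \<in> J \<Longrightarrow> cov P Y (W j) = cov P Y' (W j)) \<Longrightarrow> adjustment P J W Y = adjustment P J W Y'"
  unfolding adjustment_def by simp

lemma adjustment_eq_0:
  "(\<And>j. j \<in> J \<Longrightarrow> cov P Y (W j) = 0) \<Longrightarrow> adjustment P J W Y = (\<lambda>_. 0)"
  unfolding adjustment_def by simp

lemma adjustment_lincomb:
  assumes "prevision P"
  shows "adjustment P J W (\<lambda>s. \<Sum>b\<in>B. \<beta> b * Y b s) = (\<lambda>s. \<Sum>b\<in>B. \<beta> b * adjustment P J W (Y b) s)"
  unfolding adjustment_def
  by (simp add: cov_sum_left[OF assms] cov_scale_left[OF assms] sum_distrib_left sum_distrib_right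
      mult_ac sum.swap[of _ B])

text \<open>\<open>W l - \<Sum>k. (G V) k l * W k\<close> has zero variance because \<open>V G V = V\<close>, so it is uncorrelated
  with Y.\<close>

lemma cov_adjustment_data:
  assumes P: "prevision P" and J: "finite J" and l: "l \<in> J"
  shows "cov P (adjustment P J W Y) (W l) = cov P Y (W l)"
proof -
  define G where "G = mp_inv J (cov_matrix P W)"
  define GV where "GV = mat_mult J G (cov_matrix P W)"
  define T where "T s = W l s - (\<Sum>k\<in>J. GV k l * W k s)" for s
  have cov_T: "cov P T Z = cov P (W l) Z - (\<Sum>k\<in>J. GV k l * cov P (W k) Z)" for Z
    unfolding T_def by (simp add: cov_diff_left[OF P] cov_sum_left[OF P] cov_scale_left[OF P])
  have T_W: "cov P (W i) T = 0" if "i \<in> J" for i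
  proof -
    have "(\<Sum>k\<in>J. GV k l * cov P (W k) (W i)) = mat_mult J (cov_matrix P W) GV i l"
      unfolding mat_mult_def by (intro sum.cong refl) (simp add: cov_commute mult.commute)
    also have "\<dots> = cov P (W i) (W l)"
      using mp_inv_cov_matrix[OF J that l] unfolding GV_def G_def mat_mult_assoc .
    finally have "cov P T (W i) = 0"
      unfolding cov_T by (simp add: cov_commute)
    then show ?thesis
      by (simp add: cov_commute)
  qed
  have "cov P T T = 0"
    unfolding cov_T[of T] using T_W l by simp
  then have "cov P Y T = 0"
    by (rule cov_eq_0_if_var_eq_0[OF P])
  then have "cov P Y (W l) = (\<Sum>k\<in>J. GV k l * cov P Y (W k))"
    using cov_T[of Y] by (simp add: cov_commute)
  also have "\<dots> = cov P (W l) (adjustment P J W Y)"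
    unfolding cov_adjustment_right[OF P] GV_def G_def mat_mult_def
    by (simp add: sum_distrib_left sum_distrib_right cov_commute mult_ac)
  finally show ?thesis
    by (simp add: cov_commute)
qed

lemma cov_adjustment_adjustment:
  assumes "prevision P" and "finite J"
  shows "cov P Z (adjustment P J W Y) = cov P (adjustment P J W Z) (adjustment P J W Y)"
  unfolding cov_adjustment_right[OF assms(1)] using cov_adjustment_data[OF assms] by simp

lemma adjustment_eq_0_if_var_eq_0:
  assumes P: "prevision P" and J: "finite J"
    and "cov P (adjustment P J W Y) (adjustment P J W Y) = 0"
  shows "adjustment P J W Y = (\<lambda>_. 0)"
proof (rule adjustment_eq_0)
  fix j assume "j \<in> J"
  have "cov P (W j) (adjustment P J W Y) = 0"
    using cov_eq_0_if_var_eq_0[OF P assms(3)] .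
  then show "cov P Y (W j) = 0"
    using cov_adjustment_data[OF P J \<open>j \<in> J\<close>] by (simp add: cov_commute)
qed

text \<open>In general a vector is reproduced by its own adjustment only up to a zero-variance residual;
  here that residual is itself an adjustment by W and therefore vanishes identically.\<close>

lemma adjustment_by_adjusted_self:
  assumes P: "prevision P" and J: "finite J" and M: "finite M" and b: "b \<in> M"
  shows "adjustment P M (adj_exp P Y J W) (adj_exp P Y J W b) = adjustment P J W (Y b)"
proof
  fix s
  define PY where "PY = adj_exp P Y J W"
  let ?L = "\<lambda>a. adjustment P J W (Y a)"
  define K where "K = cov_matrix P PY"
  define H where "H = mp_inv M K"
  have PY: "PY a = (\<lambda>s. P (Y a) + ?L a s)" for a
    unfolding PY_def adj_exp_eq_adjustment ..
  have K: "K a c = cov P (?L a) (?L c)" for a c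
    unfolding K_def PY by (rule cov_add_consts[OF P])
  define \<beta> where "\<beta> c = (if c = b then 1 else 0) - mat_mult M K H b c" for c
  define T where "T = adjustment P J W (\<lambda>s. \<Sum>c\<in>M. \<beta> c * Y c s)"
  have T: "T = (\<lambda>s. \<Sum>c\<in>M. \<beta> c * ?L c s)"
    unfolding T_def adjustment_lincomb[OF P] ..
  have delta: "(\<Sum>c\<in>M. (if c = b then 1 else 0) * f c) = f b" for f :: "_ \<Rightarrow> real"
    using M b by (simp add: if_distrib[of "\<lambda>x. x * _"] cong: if_cong)
  have T_orth: "cov P T (?L a) = 0" if "a \<in> M" for a
  proof -
    have "cov P T (?L a) = (\<Sum>c\<in>M. \<beta> c * K c a)"
      unfolding T by (simp add: cov_sum_left[OF P] cov_scale_left[OF P] K)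
    also have "\<dots> = K b a - mat_mult M (mat_mult M K H) K b a"
      unfolding \<beta>_def
      by (simp add: left_diff_distrib sum_subtractf delta mat_mult_def[of M "mat_mult M K H"])
    also have "\<dots> = 0"
      using mp_inv_cov_matrix[OF M b that, where P = P and W = PY] unfolding K_def H_def by simp
    finally show ?thesis .
  qed
  have "cov P T T = (\<Sum>c\<in>M. \<beta> c * cov P T (?L c))"
    by (subst (2) T) (simp add: cov_sum_right[OF P] cov_scale_right[OF P])
  also have "\<dots> = 0"
    using T_orth by simp
  finally have "T = (\<lambda>_. 0)"
    unfolding T_def by (rule adjustment_eq_0_if_var_eq_0[OF P J])
  then have "?L b s = (\<Sum>c\<in>M. mat_mult M K H b c * ?L c s)"
    unfolding T \<beta>_def by (simp add: fun_eq_iff left_diff_distrib sum_subtractf delta)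
  also have "\<dots> = (\<Sum>a\<in>M. K b a * (\<Sum>c\<in>M. H a c * ?L c s))"
    unfolding mat_mult_def sum_mult_sum_commute ..
  also have "\<dots> = adjustment P M PY (PY b) s"
  proof -
    have "PY c s - P (PY c) = ?L c s" for c
      unfolding PY
      by (simp add: prevision_add[OF P] prevision_const[OF P] prevision_adjustment[OF P])
    then show ?thesis
      unfolding adjustment_def K_def[symmetric] H_def[symmetric]
      by (simp add: K_def sum_distrib_left mult.assoc)
  qed
  finally show "adjustment P M (adj_exp P Y J W) (adj_exp P Y J W b) s = ?L b s"
    unfolding PY_def ..
qed

lemma adjustment_linear_model:
  assumes P: "prevision P" and U: "\<And>j. j \<in> J \<Longrightarrow> cov P U (W j) = 0"
  shows "adjustment P J W (\<lambda>s. (\<Sum>a\<in>M. \<alpha> a * Y a s) + U s) =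
    (\<lambda>s. \<Sum>a\<in>M. \<alpha> a * adjustment P J W (Y a) s)"
proof -
  have "adjustment P J W (\<lambda>s. (\<Sum>a\<in>M. \<alpha> a * Y a s) + U s) = adjustment P J W (\<lambda>s. \<Sum>a\<in>M. \<alpha> a * Y a s)"
    by (rule adjustment_cong) (simp add: cov_add_left[OF P] U)
  then show ?thesis
    unfolding adjustment_lincomb[OF P] .
qed

lemma adj_exp_linear_model:
  assumes P: "prevision P" and X: "X c = (\<lambda>s. (\<Sum>a\<in>M. \<alpha> a * Y a s) + U s)"
    and U: "\<And>j. j \<in> J \<Longrightarrow> cov P U (W j) = 0"
  shows "adj_exp P X J W c = (\<lambda>s. (\<Sum>a\<in>M. \<alpha> a * adj_exp P Y J W a s) + P U)"
proof
  fix s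
  have "P (X c) = (\<Sum>a\<in>M. \<alpha> a * P (Y a)) + P U"
    unfolding X by (simp add: prevision_add[OF P] prevision_sum[OF P] prevision_scale[OF P])
  moreover have "adjustment P J W (X c) = (\<lambda>s. \<Sum>a\<in>M. \<alpha> a * adjustment P J W (Y a) s)"
    unfolding X by (rule adjustment_linear_model[OF P U])
  ultimately show "adj_exp P X J W c s = (\<Sum>a\<in>M. \<alpha> a * adj_exp P Y J W a s) + P U"
    unfolding adj_exp_eq_adjustment by (simp add: distrib_left sum.distrib)
qed

lemma adj_exp_by_adjusted_vector:
  assumes P: "prevision P" and J: "finite J" and M: "finite M"
    and adj_X: "\<And>c. adjustment P J W (X c) = (\<lambda>s. \<Sum>b\<in>M. \<alpha> c b * adjustment P J W (Y b) s)"
  shows "adj_exp P X M (adj_exp P Y J W) = adj_exp P X J W"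
proof (intro ext)
  fix c s
  define PY where "PY = adj_exp P Y J W"
  let ?L = "\<lambda>a. adjustment P J W (Y a)"
  have PY: "PY a = (\<lambda>s. P (Y a) + ?L a s)" for a
    unfolding PY_def adj_exp_eq_adjustment ..
  have cov_X: "cov P (X c) (PY a) = cov P (\<lambda>s. \<Sum>b\<in>M. \<alpha> c b * PY b s) (PY a)" for a
  proof -
    have "cov P (X c) (PY a) = cov P (adjustment P J W (X c)) (?L a)"
      unfolding PY cov_add_const_right[OF P] by (rule cov_adjustment_adjustment[OF P J])
    also have "\<dots> = (\<Sum>b\<in>M. \<alpha> c b * cov P (PY b) (PY a))"
      unfolding adj_X PY cov_add_consts[OF P] by (simp add: cov_sum_left[OF P] cov_scale_left[OF P])
    finally show ?thesis
      by (simp add: cov_sum_left[OF P] cov_scale_left[OF P])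
  qed
  have "adjustment P M PY (X c) = adjustment P M PY (\<lambda>s. \<Sum>b\<in>M. \<alpha> c b * PY b s)"
    by (rule adjustment_cong) (rule cov_X)
  also have "\<dots> = (\<lambda>s. \<Sum>b\<in>M. \<alpha> c b * adjustment P M PY (PY b) s)"
    by (rule adjustment_lincomb[OF P])
  also have "\<dots> = adjustment P J W (X c)"
    unfolding adj_X PY_def using adjustment_by_adjusted_self[OF P J M] by simp
  finally show "adj_exp P X M (adj_exp P Y J W) c s = adj_exp P X J W c s"
    unfolding adj_exp_eq_adjustment PY_def by simp
qed

theorem lemma3p1:
  fixes P :: "('s \<Rightarrow> real) \<Rightarrow> real"
    and m :: nat and n :: "nat \<Rightarrow> nat"
    and Z R :: "nat \<Rightarrow> nat \<Rightarrow> 'd::finite \<Rightarrow> 's \<Rightarrow> real"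
    and mu :: "nat \<Rightarrow> 'd \<Rightarrow> 's \<Rightarrow> real"
    and A :: "nat \<Rightarrow> 'd \<Rightarrow> 'd \<Rightarrow> real"
    and X U :: "'d \<Rightarrow> 's \<Rightarrow> real"
  assumes prev: "prevision P"
    and m_pos: "m \<ge> 1"
    and n_pos: "\<forall>i\<in>{1..m}. n i \<ge> 1"
    and Z_def: "\<forall>i\<in>{1..m}. \<forall>j\<in>{1..n i}. \<forall>c s. Z i j c s = mu i c s + R i j c s"
    and R_mean: "\<forall>i\<in>{1..m}. \<forall>j\<in>{1..n i}. \<forall>c. P (R i j c) = 0"
    and R_mu: "\<forall>i\<in>{1..m}. \<forall>j\<in>{1..n i}. \<forall>k\<in>{1..m}. \<forall>c c'. cov P (R i j c) (mu k c') = 0"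
    and R_R: "\<forall>i\<in>{1..m}. \<forall>j\<in>{1..n i}. \<forall>k\<in>{1..m}. \<forall>l\<in>{1..n k}. (i, j) \<noteq> (k, l) \<longrightarrow>
                (\<forall>c c'. cov P (R i j c) (R k l c') = 0)"
    and R_var: "\<forall>i\<in>{1..m}. \<forall>j\<in>{1..n i}. \<forall>j'\<in>{1..n i}. \<forall>c c'.
                cov P (R i j c) (R i j c') = cov P (R i j' c) (R i j' c')"
    and X_def: "\<forall>c s. X c s = (\<Sum>i\<in>{1..m}. \<Sum>c'\<in>UNIV. A i c c' * mu i c' s) + U c s"
    and U_mu: "\<forall>k\<in>{1..m}. \<forall>c c'. cov P (U c) (mu k c') = 0"
    and U_R: "\<forall>i\<in>{1..m}. \<forall>j\<in>{1..n i}. \<forall>c c'. cov P (U c) (R i j c') = 0"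
  shows
    "let ZI = {(i, j, c). i \<in> {1..m} \<and> j \<in> {1..n i}};
         Zv = (\<lambda>(i, j, c). Z i j c);
         MI = {(i, c). i \<in> {1..m}};
         muv = (\<lambda>(i, c). mu i c);
         PZmu = adj_exp P muv ZI Zv
     in adj_exp P X ZI Zv = adj_exp P X MI PZmu
        \<and> adj_exp P X ZI Zv = (\<lambda>c s. (\<Sum>i\<in>{1..m}. \<Sum>c'\<in>UNIV. A i c c' * PZmu (i, c') s) + P (U c))"
proof -
  define ZI :: "(nat \<times> nat \<times> 'd) set" where "ZI = {(i, j, c). i \<in> {1..m} \<and> j \<in> {1..n i}}"
  define Zv where "Zv = (\<lambda>(i, j, c). Z i j c)"
  define MI :: "(nat \<times> 'd) set" where "MI = {(i, c). i \<in> {1..m}}"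
  define muv where "muv = (\<lambda>(i, c). mu i c)"
  define \<alpha> where "\<alpha> c a = A (fst a) c (snd a)" for c a
  have "ZI = (SIGMA i:{1..m}. {1..n i} \<times> UNIV)"
    unfolding ZI_def by auto
  then have fin_ZI: "finite ZI"
    by (simp add: finite_SigmaI finite_cartesian_product)
  have MI: "MI = {1..m} \<times> UNIV"
    unfolding MI_def by auto
  have reindex: "(\<Sum>a\<in>MI. g a) = (\<Sum>i\<in>{1..m}. \<Sum>c\<in>UNIV. g (i, c))" for g :: "_ \<Rightarrow> real"
    unfolding MI sum.cartesian_product by simp
  have X_model: "X c = (\<lambda>s. (\<Sum>a\<in>MI. \<alpha> c a * muv a s) + U c s)" for c
    using X_def by (simp add: fun_eq_iff reindex \<alpha>_def muv_def)
  have U_Z: "cov P (U c) (Zv j) = 0" if j: "j \<in> ZI" for c j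
  proof -
    obtain i l d where jd: "j = (i, l, d)" "i \<in> {1..m}" "l \<in> {1..n i}"
      using j unfolding ZI_def by auto
    then have "Zv j = (\<lambda>s. mu i d s + R i l d s)"
      using Z_def unfolding Zv_def by auto
    then show ?thesis
      using U_mu U_R jd by (simp add: cov_add_right[OF prev])
  qed
  have "adj_exp P X ZI Zv = adj_exp P X MI (adj_exp P muv ZI Zv)"
    using adjustment_linear_model[OF prev U_Z]
    by (intro adj_exp_by_adjusted_vector[OF prev fin_ZI, symmetric]) (auto simp: MI X_model)
  moreover have "adj_exp P X ZI Zv c =
      (\<lambda>s. (\<Sum>i\<in>{1..m}. \<Sum>c'\<in>UNIV. A i c c' * adj_exp P muv ZI Zv (i, c') s) + P (U c))" for c
    using adj_exp_linear_model[OF prev X_model U_Z] by (simp add: reindex \<alpha>_def)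
  ultimately show ?thesis
    unfolding ZI_def Zv_def MI_def muv_def Let_def by auto
qed

end
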